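(* Let $D$ be a pv-monoid (idempotent, with symmetric valuation function), $P$ a nonempty finite set of ports, $I,J$ nonempty finite index sets and $m_i$ ($i\in I$), $m'_j$ ($j\in J$) full monomials over $P$. Then \[\Big(\sum_{i\in I}m_i\Big)\otimes\Big(\sum_{j\in J}m'_j\Big)\equiv\begin{cases}\sum_{i\in I}m_i & \text{if } \sum_{i\in I}m_i\equiv\sum_{j\in J}m'_j,\\ 0&\text{otherwise.}\end{cases}\]
   Context: A pv-monoid $(D,\oplus,\mathrm{val},\otimes,0,1)$ consists of a commutative monoid $(D,\oplus,0)$, a map $\mathrm{val}$ from nonempty finite sequences over $D$ to $D$ with $\mathrm{val}(d)=d$ and $\mathrm{val}(d_1,\dots,d_n)=0$ whenever some $d_i=0$, a binary operation $\otimes$ and an element $1$ with $\mathrm{val}(1,\dots,1)=1$, $0\otimes d=d\otimes0=0$, $1\otimes d=d\otimes1=d$. Standing assumption: $D$ is idempotent and $\mathrm{val}$ is symmetric. $I(P)$ is the set of nonempty subsets of $P$, $C(P)$ the set of nonempty subsets of $I(P)$. PIL formulas: $\phi::=true\mid p\mid\overline{\phi}\mid\phi\vee\phi$ ($p\in P$), $\alpha\models_i p$ iff $p\in\alpha$, negation and disjunction as usual, $\wedge$ via De Morgan. A full monomial is a PIL formula $\bigwedge_{p\in P_+}p\wedge\bigwedge_{p\in P_-}\overline p$ with $P_+\cup P_-=P$, $P_+\cap P_-=\emptyset$. PCL formulas: $f::=true\mid\phi\mid\neg f\mid f\sqcup f\mid f+f$; $\gamma\models\phi$ iff every $\alpha\in\gamma$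 satisfies $\phi$; $\neg,\sqcup$ are complement and union; $\gamma\models f_1+f_2$ iff $\gamma=\gamma_1\cup\gamma_2$ with $\gamma_1,\gamma_2\in C(P)$, $\gamma_1\models f_1,\gamma_2\models f_2$. $\sum_{j\in J}m_j$ is the $+$-combination. Weighted formulas are built from constants $d\in D$ and PCL formulas by $\oplus,\otimes$ (and further operators), with semantics $\|\cdot\|:C(P)\to D$: $\|d\|(\gamma)=d$, $\|f\|(\gamma)=1$ if $\gamma\models f$ and $0$ otherwise, $\oplus,\otimes$ pointwise. $\equiv$ means equality of semantics on all of $C(P)$. *)

theory Defs
  imports "HOL-Library.Multiset"
begin

locale pv_monoid =
  fixes oplus :: "'d \<Rightarrow> 'd \<Rightarrow> 'd"
    and val :: "'d list \<Rightarrow> 'd"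
    and otimes :: "'d \<Rightarrow> 'd \<Rightarrow> 'd"
    and zero :: 'd
    and one :: 'd
  assumes oplus_assoc: "oplus (oplus a b) c = oplus a (oplus b c)"
    and oplus_comm: "oplus a b = oplus b a"
    and oplus_zero: "oplus zero a = a"
    and val_single: "val [d] = d"
    and val_zero: "ds \<noteq> [] \<Longrightarrow> zero \<in> set ds \<Longrightarrow> val ds = zero"
    and val_one: "n \<ge> 1 \<Longrightarrow> val (replicate n one) = one"
    and otimes_zero_left: "otimes zero d = zero"
    and otimes_zero_right: "otimes d zero = zero"
    and otimes_one_left: "otimes one d = d"
    and otimes_one_right: "otimes d one = d"
    and oplus_idem: "oplus d d = d"
    and val_symmetric: "ds \<noteq> [] \<Longrightarrow> mset ds = mset ds' \<Longrightarrow> val ds = val ds'"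

definition Iset :: "'p set \<Rightarrow> 'p set set" where
  "Iset P = {\<alpha>. \<alpha> \<noteq> {} \<and> \<alpha> \<subseteq> P}"

definition Cset :: "'p set \<Rightarrow> 'p set set set" where
  "Cset P = {\<gamma>. \<gamma> \<noteq> {} \<and> \<gamma> \<subseteq> Iset P}"

datatype 'p pil = PTrue | PVar 'p | PNeg "'p pil" | POr "'p pil" "'p pil"

primrec pil_sat :: "'p set \<Rightarrow> 'p pil \<Rightarrow> bool" where
  "pil_sat \<alpha> PTrue = True"
| "pil_sat \<alpha> (PVar p) = (p \<in> \<alpha>)"
| "pil_sat \<alpha> (PNeg \<phi>) = (\<not> pil_sat \<alpha> \<phi>)"
| "pil_sat \<alpha> (POr \<phi> \<psi>) = (pil_sat \<alpha> \<phi> \<or> pil_sat \<alpha> \<psi>)"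

definition PAnd :: "'p pil \<Rightarrow> 'p pil \<Rightarrow> 'p pil" where
  "PAnd \<phi> \<psi> = PNeg (POr (PNeg \<phi>) (PNeg \<psi>))"

fun pil_conj :: "'p pil list \<Rightarrow> 'p pil" where
  "pil_conj [] = PTrue"
| "pil_conj [\<phi>] = \<phi>"
| "pil_conj (\<phi> # \<phi>s) = PAnd \<phi> (pil_conj \<phi>s)"

definition full_monomial :: "'p set \<Rightarrow> 'p pil \<Rightarrow> bool" where
  "full_monomial P m \<longleftrightarrow> (\<exists>ps Pp. distinct ps \<and> set ps = P \<and> Pp \<subseteq> P \<and>
     m = pil_conj (map (\<lambda>p. if p \<in> Pp then PVar p else PNeg (PVar p)) ps))"

datatype 'p pcl = FTrue | FPil "'p pil" | FNeg "'p pcl" | FUnion "'p pcl" "'p pcl"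
  | FPlus "'p pcl" "'p pcl"

primrec pcl_sat :: "'p set \<Rightarrow> 'p set set \<Rightarrow> 'p pcl \<Rightarrow> bool" where
  "pcl_sat P \<gamma> FTrue = True"
| "pcl_sat P \<gamma> (FPil \<phi>) = (\<forall>\<alpha>\<in>\<gamma>. pil_sat \<alpha> \<phi>)"
| "pcl_sat P \<gamma> (FNeg f) = (\<not> pcl_sat P \<gamma> f)"
| "pcl_sat P \<gamma> (FUnion f g) = (pcl_sat P \<gamma> f \<or> pcl_sat P \<gamma> g)"
| "pcl_sat P \<gamma> (FPlus f g) = (\<exists>\<gamma>1 \<gamma>2. \<gamma>1 \<in> Cset P \<and> \<gamma>2 \<in> Cset P \<and> \<gamma> = \<gamma>1 \<union> \<gamma>2 \<and>
      pcl_sat P \<gamma>1 f \<and> pcl_sat P \<gamma>2 g)"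

text \<open>The +-combination of a nonempty indexed family of PIL formulas
  (family given as a nonempty list, index set = positions).\<close>
fun pcl_sum :: "'p pil list \<Rightarrow> 'p pcl" where
  "pcl_sum [] = FTrue"
| "pcl_sum [m] = FPil m"
| "pcl_sum (m # ms) = FPlus (FPil m) (pcl_sum ms)"

datatype ('d, 'p) wf = WConst 'd | WPcl "'p pcl" | WPlus "('d,'p) wf" "('d,'p) wf"
  | WTimes "('d,'p) wf" "('d,'p) wf"

primrec wsem :: "('d \<Rightarrow> 'd \<Rightarrow> 'd) \<Rightarrow> ('d \<Rightarrow> 'd \<Rightarrow> 'd) \<Rightarrow> 'd \<Rightarrow> 'd \<Rightarrow> 'p set
    \<Rightarrow> ('d, 'p) wf \<Rightarrow> 'p set set \<Rightarrow> 'd" where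
  "wsem pl tm z on P (WConst d) \<gamma> = d"
| "wsem pl tm z on P (WPcl f) \<gamma> = (if pcl_sat P \<gamma> f then on else z)"
| "wsem pl tm z on P (WPlus u v) \<gamma> = pl (wsem pl tm z on P u \<gamma>) (wsem pl tm z on P v \<gamma>)"
| "wsem pl tm z on P (WTimes u v) \<gamma> = tm (wsem pl tm z on P u \<gamma>) (wsem pl tm z on P v \<gamma>)"

definition wequiv :: "('d \<Rightarrow> 'd \<Rightarrow> 'd) \<Rightarrow> ('d \<Rightarrow> 'd \<Rightarrow> 'd) \<Rightarrow> 'd \<Rightarrow> 'd \<Rightarrow> 'p set
    \<Rightarrow> ('d, 'p) wf \<Rightarrow> ('d, 'p) wf \<Rightarrow> bool" where
  "wequiv pl tm z on P u v \<longleftrightarrow> (\<forall>\<gamma>\<in>Cset P. wsem pl tm z on P u \<gamma> = wsem pl tm z on P v \<gamma>)"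

end

theory Submission
  imports Defs
begin

text \<open>A full monomial over P is satisfied by exactly one subset of P, so as a PCL formula it
  has at most one model in C(P); the +-combination preserves having at most one model, since
  the model of f + g must be the union of the models of f and g. Hence both sides of the
  product are indicator functions of at most one configuration, and their product is the
  first indicator if the two coincide and 0 otherwise.\<close>

definition at_most_one_model :: "'p set \<Rightarrow> 'p pcl \<Rightarrow> bool" where
  "at_most_one_model P f \<longleftrightarrow>
     (\<forall>\<gamma>1\<in>Cset P. \<forall>\<gamma>2\<in>Cset P. pcl_sat P \<gamma>1 f \<longrightarrow> pcl_sat P \<gamma>2 f \<longrightarrow> \<gamma>1 = \<gamma>2)"

lemma pil_sat_pil_conj: "pil_sat \<alpha> (pil_conj \<phi>s) \<longleftrightarrow> (\<forall>\<phi>\<in>set \<phi>s. pil_sat \<alpha> \<phi>)"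
  by (induction \<phi>s rule: pil_conj.induct) (auto simp: PAnd_def)

lemma full_monomial_sat_iff:
  assumes "full_monomial P m"
  obtains A where "\<And>\<alpha>. \<alpha> \<subseteq> P \<Longrightarrow> pil_sat \<alpha> m \<longleftrightarrow> \<alpha> = A"
proof -
  obtain ps Pp where ps: "set ps = P" and Pp: "Pp \<subseteq> P"
    and m: "m = pil_conj (map (\<lambda>p. if p \<in> Pp then PVar p else PNeg (PVar p)) ps)"
    using assms unfolding full_monomial_def by blast
  have "pil_sat \<alpha> m \<longleftrightarrow> \<alpha> = Pp" if "\<alpha> \<subseteq> P" for \<alpha>
  proof -
    have "pil_sat \<alpha> m \<longleftrightarrow> (\<forall>p\<in>P. p \<in> \<alpha> \<longleftrightarrow> p \<in> Pp)"
      unfolding m pil_sat_pil_conj set_map ball_simps ps[symmetric] by auto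
    also have "\<dots> \<longleftrightarrow> \<alpha> = Pp"
      using that Pp by blast
    finally show ?thesis .
  qed
  then show ?thesis using that by blast
qed

lemma at_most_one_model_full_monomial:
  assumes "full_monomial P m"
  shows "at_most_one_model P (FPil m)"
proof -
  obtain A where A: "\<And>\<alpha>. \<alpha> \<subseteq> P \<Longrightarrow> pil_sat \<alpha> m \<longleftrightarrow> \<alpha> = A"
    using full_monomial_sat_iff[OF assms] by blast
  have "\<gamma> = {A}" if "\<gamma> \<in> Cset P" "pcl_sat P \<gamma> (FPil m)" for \<gamma>
    using that A unfolding Cset_def Iset_def by auto
  then show ?thesis
    unfolding at_most_one_model_def by blast
qed

lemma at_most_one_model_FPlus:
  assumes "at_most_one_model P f" and "at_most_one_model P g"
  shows "at_most_one_model P (FPlus f g)"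
  using assms unfolding at_most_one_model_def by (simp (no_asm_simp)) blast

lemma at_most_one_model_pcl_sum:
  assumes "ms \<noteq> []" and "\<forall>m\<in>set ms. at_most_one_model P (FPil m)"
  shows "at_most_one_model P (pcl_sum ms)"
  using assms by (induction ms rule: pcl_sum.induct) (auto intro: at_most_one_model_FPlus)

lemma wequiv_WPcl_if_common_model:
  assumes "at_most_one_model P f" and "at_most_one_model P g"
    and "\<gamma> \<in> Cset P" and "pcl_sat P \<gamma> f" and "pcl_sat P \<gamma> g"
  shows "wequiv pl tm z on P (WPcl f) (WPcl g)"
proof -
  have "pcl_sat P \<delta> f \<longleftrightarrow> pcl_sat P \<delta> g" if "\<delta> \<in> Cset P" for \<delta>
    using assms that unfolding at_most_one_model_def by metis
  then show ?thesis
    unfolding wequiv_def by simp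
qed

lemma (in pv_monoid) wequiv_WTimes_at_most_one_model:
  assumes "at_most_one_model P f" and "at_most_one_model P g"
  shows "wequiv oplus otimes zero one P (WTimes (WPcl f) (WPcl g))
           (if wequiv oplus otimes zero one P (WPcl f) (WPcl g) then WPcl f else WConst zero)"
proof (cases "wequiv oplus otimes zero one P (WPcl f) (WPcl g)")
  case True
  then show ?thesis
    unfolding wequiv_def by (auto simp: otimes_one_left otimes_zero_left)
next
  case False
  have "\<not> (pcl_sat P \<gamma> f \<and> pcl_sat P \<gamma> g)" if "\<gamma> \<in> Cset P" for \<gamma>
    using False wequiv_WPcl_if_common_model[OF assms that, of oplus otimes zero one] by blast
  with False show ?thesis
    unfolding wequiv_def by (auto simp: otimes_zero_left otimes_zero_right)
qed

theorem mainTheorem12: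
  fixes oplus otimes :: "'d \<Rightarrow> 'd \<Rightarrow> 'd" and val :: "'d list \<Rightarrow> 'd" and zero one :: 'd
    and P :: "'p set" and ms ms' :: "'p pil list"
  assumes "pv_monoid oplus val otimes zero one"
    and "finite P" and "P \<noteq> {}"
    and "ms \<noteq> []" and "ms' \<noteq> []"
    and "\<forall>m\<in>set ms. full_monomial P m" and "\<forall>m\<in>set ms'. full_monomial P m"
  shows "wequiv oplus otimes zero one P
           (WTimes (WPcl (pcl_sum ms)) (WPcl (pcl_sum ms')))
           (if wequiv oplus otimes zero one P (WPcl (pcl_sum ms)) (WPcl (pcl_sum ms'))
            then WPcl (pcl_sum ms) else WConst zero)"
proof -
  have "at_most_one_model P (pcl_sum ms)" and "at_most_one_model P (pcl_sum ms')"
    using assms(4-7) by (simp_all add: at_most_one_model_pcl_sum at_most_one_model_full_monomial)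
  then show ?thesis
    using pv_monoid.wequiv_WTimes_at_most_one_model[OF assms(1)] by blast
qed

end
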